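(* Let $\lambda>0$ and let $\mathbf r_\lambda=(\mathbf r_{1\lambda},\dots,\mathbf r_{N\lambda})\in\mathfrak R$ be any point at which $f+\lambda g$ attains its minimum over $\mathfrak R$. Write $\mathbf r_{i\lambda}=(x_{i\lambda},y_{i\lambda})=|\mathbf r_{i\lambda}|(\cos\varphi_{i\lambda},\sin\varphi_{i\lambda})$, put $\omega=\sqrt{2\lambda}$, and define for $t\ge 0$ $$\mathbf r_{i\lambda}(t)=|\mathbf r_{i\lambda}|\big(\cos(\varphi_{i\lambda}+\omega t),\ \sin(\varphi_{i\lambda}+\omega t)\big),\qquad i=1,\dots,N .$$ Then $\mathbf r_\lambda(t)=(\mathbf r_{1\lambda}(t),\dots,\mathbf r_{N\lambda}(t))$, $t\ge0$, is a solution of the equations of motion $m_i\ddot{\mathbf r}_i=\mathbf F_i(\mathbf r)$, $i=1,\dots,N$, with initial conditions $\mathbf r_i(0)=\mathbf r_{i\lambda}$, $\dot{\mathbf r}_i(0)=(-\omega y_{i\lambda},\ \omega x_{i\lambda})$, $i=1,\dots,N$.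
   Context: Fix $N\ge 2$, masses $m_1,\dots,m_N>0$ and a constant $\gamma>0$. The planar configuration space is $\mathfrak R=\{\mathbf r=(\mathbf r_1,\dots,\mathbf r_N)\in(\mathbb R^2)^N:\ \mathbf r_i\neq\mathbf r_j \text{ for } i\neq j\}$. Define $f(\mathbf r)=\sum_{i<j}\frac{\gamma m_im_j}{|\mathbf r_j-\mathbf r_i|}$ and $g(\mathbf r)=\sum_i m_i|\mathbf r_i|^2$ on $\mathfrak R$. The force on particle $i$ is $\mathbf F_i(\mathbf r)=\sum_{j\ne i}\frac{\gamma m_im_j(\mathbf r_j-\mathbf r_i)}{|\mathbf r_j-\mathbf r_i|^3}$. For every $\lambda>0$ the function $f+\lambda g$ attains its minimum on $\mathfrak R$. *)

theory Defs
  imports "HOL-Analysis.Analysis"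
begin

definition config_space :: "nat \<Rightarrow> (nat \<Rightarrow> real \<times> real) set" where
  "config_space N = {r. \<forall>i<N. \<forall>j<N. i \<noteq> j \<longrightarrow> r i \<noteq> r j}"

definition potf :: "nat \<Rightarrow> real \<Rightarrow> (nat \<Rightarrow> real) \<Rightarrow> (nat \<Rightarrow> real \<times> real) \<Rightarrow> real" where
  "potf N \<gamma> m r = (\<Sum>j<N. \<Sum>i<j. \<gamma> * m i * m j / norm (r j - r i))"

definition momg :: "nat \<Rightarrow> (nat \<Rightarrow> real) \<Rightarrow> (nat \<Rightarrow> real \<times> real) \<Rightarrow> real" where
  "momg N m r = (\<Sum>i<N. m i * (norm (r i))\<^sup>2)"

definition force :: "nat \<Rightarrow> real \<Rightarrow> (nat \<Rightarrow> real) \<Rightarrow> (nat \<Rightarrow> real \<times> real) \<Rightarrow> nat \<Rightarrow> real \<times> real" where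
  "force N \<gamma> m r i =
     (\<Sum>j\<in>{..<N} - {i}. (\<gamma> * m i * m j / (norm (r j - r i)) ^ 3) *\<^sub>R (r j - r i))"

end

theory Submission
  imports Defs
begin

(* A minimiser of f + lam g is a critical point.  Moving particle i alone, the gradient
   of f is the force F_i and that of lam g is 2 lam m_i r_i, so F_i = -2 lam m_i r_i at the
   minimiser.  A rotation of the plane is a linear isometry, so the forces of the rotated
   configuration are the rotated forces, whereas uniform rotation with angular velocity
   omega = sqrt (2 lam) has acceleration -omega^2 r_i = -2 lam r_i. *)

lemma sum_pairs_split:
  fixes T :: "nat \<Rightarrow> nat \<Rightarrow> 'a::comm_monoid_add"
  assumes sym: "\<And>j k. T j k = T k j" and i: "i < N"
  shows "(\<Sum>k<N. \<Sum>j<k. T j k) =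
    (\<Sum>k<N. \<Sum>j<k. if j = i \<or> k = i then 0 else T j k) + (\<Sum>j\<in>{..<N} - {i}. T i j)"
proof -
  have split: "T j k = (if j = i \<or> k = i then 0 else T j k)
      + ((if k = i then T i j else 0) + (if j = i then T i k else 0))" if "j < k" for j k
    using that sym by auto
  have "(\<Sum>k<N. \<Sum>j<k. if k = i then T i j else 0) =
      (\<Sum>k<N. if k = i then \<Sum>j<i. T i j else 0)"
    by (intro sum.cong) auto
  also have "\<dots> = (\<Sum>j<i. T i j)" using i by simp
  finally have lower: "(\<Sum>k<N. \<Sum>j<k. if k = i then T i j else 0) = (\<Sum>j<i. T i j)" .
  have "(\<Sum>k<N. \<Sum>j<k. if j = i then T i k else 0) = (\<Sum>k<N. if i < k then T i k else 0)"
    by (simp add: sum.delta)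
  also have "\<dots> = (\<Sum>k\<in>{i<..<N}. T i k)"
    by (simp add: sum.If_cases) (intro sum.cong, auto)
  finally have upper:
    "(\<Sum>k<N. \<Sum>j<k. if j = i then T i k else 0) = (\<Sum>k\<in>{i<..<N}. T i k)" .
  have "{..<N} - {i} = {..<i} \<union> {i<..<N}" using i by auto
  then have "(\<Sum>j\<in>{..<N} - {i}. T i j) = (\<Sum>j\<in>{..<i} \<union> {i<..<N}. T i j)"
    by simp
  also have "\<dots> = (\<Sum>j<i. T i j) + (\<Sum>k\<in>{i<..<N}. T i k)"
    by (rule sum.union_disjoint) auto
  finally have both:
    "(\<Sum>j\<in>{..<N} - {i}. T i j) = (\<Sum>j<i. T i j) + (\<Sum>k\<in>{i<..<N}. T i k)" .
  have "(\<Sum>k<N. \<Sum>j<k. T j k) = (\<Sum>k<N. \<Sum>j<k. (if j = i \<or> k = i then 0 else T j k)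
      + ((if k = i then T i j else 0) + (if j = i then T i k else 0)))"
    by (intro sum.cong refl split) simp
  also have "\<dots> = (\<Sum>k<N. \<Sum>j<k. if j = i \<or> k = i then 0 else T j k)
      + ((\<Sum>k<N. \<Sum>j<k. if k = i then T i j else 0) + (\<Sum>k<N. \<Sum>j<k. if j = i then T i k else 0))"
    by (simp only: sum.distrib)
  finally show ?thesis using lower upper both by simp
qed

lemma potf_fun_upd:
  assumes "i < N"
  obtains C where
    "\<And>p. potf N \<gamma> m (r(i := p)) = C + (\<Sum>j\<in>{..<N} - {i}. \<gamma> * m i * m j / norm (r j - p))"
proof
  fix p
  let ?T = "\<lambda>j k. \<gamma> * m j * m k / norm ((r(i := p)) k - (r(i := p)) j)"
  have "potf N \<gamma> m (r(i := p)) =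
      (\<Sum>k<N. \<Sum>j<k. if j = i \<or> k = i then 0 else ?T j k) + (\<Sum>j\<in>{..<N} - {i}. ?T i j)"
    unfolding potf_def
    by (rule sum_pairs_split[OF _ assms]) (simp add: norm_minus_commute mult_ac)
  also have "(\<Sum>k<N. \<Sum>j<k. if j = i \<or> k = i then 0 else ?T j k) =
      (\<Sum>k<N. \<Sum>j<k. if j = i \<or> k = i then 0 else \<gamma> * m j * m k / norm (r k - r j))"
    by (intro sum.cong) auto
  also have "(\<Sum>j\<in>{..<N} - {i}. ?T i j) = (\<Sum>j\<in>{..<N} - {i}. \<gamma> * m i * m j / norm (r j - p))"
    by (intro sum.cong) auto
  finally show "potf N \<gamma> m (r(i := p)) =
      (\<Sum>k<N. \<Sum>j<k. if j = i \<or> k = i then 0 else \<gamma> * m j * m k / norm (r k - r j))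
      + (\<Sum>j\<in>{..<N} - {i}. \<gamma> * m i * m j / norm (r j - p))" .
qed

lemma momg_fun_upd:
  assumes "i < N"
  shows "momg N m (r(i := p)) = (\<Sum>j\<in>{..<N} - {i}. m j * (norm (r j))\<^sup>2) + m i * (norm p)\<^sup>2"
  unfolding momg_def using assms by (subst sum.remove[of _ i]) (auto intro!: sum.cong)

lemma fun_upd_in_config_space_iff:
  assumes "r \<in> config_space N" and "i < N"
  shows "r(i := p) \<in> config_space N \<longleftrightarrow> p \<notin> r ` ({..<N} - {i})"
  using assms unfolding config_space_def by (auto simp: fun_upd_def)

lemma has_derivative_inverse_norm_diff:
  fixes a p :: "'a::real_inner"
  assumes "a \<noteq> p"
  shows "((\<lambda>q. 1 / norm (a - q)) has_derivative (\<lambda>v. ((a - p) \<bullet> v) / norm (a - p) ^ 3)) (at p)"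
proof -
  have ap: "a - p \<noteq> 0" using assms by simp
  have dnorm: "((\<lambda>q. norm (a - q)) has_derivative (\<lambda>v. (- v) \<bullet> sgn (a - p))) (at p)"
    using has_derivative_compose[OF has_derivative_diff[OF has_derivative_const has_derivative_ident]
        has_derivative_norm[OF ap]]
    by simp
  have "((\<lambda>q. inverse (norm (a - q))) has_derivative
      (\<lambda>v. - (inverse (norm (a - p)) * ((- v) \<bullet> sgn (a - p)) * inverse (norm (a - p))))) (at p)"
    using ap by (intro Deriv.has_derivative_inverse dnorm) simp
  moreover have "(- v) \<bullet> sgn (a - p) = - ((a - p) \<bullet> v) / norm (a - p)" for v
    unfolding sgn_div_norm inner_minus_left inner_scaleR_right
    by (simp add: inner_commute divide_inverse)
  ultimately show ?thesis
    by (simp add: divide_inverse power3_eq_cube mult_ac)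
qed

lemma has_derivative_potf_fun_upd:
  assumes r: "r \<in> config_space N" and i: "i < N"
  shows "((\<lambda>p. potf N \<gamma> m (r(i := p))) has_derivative (\<lambda>v. force N \<gamma> m r i \<bullet> v)) (at (r i))"
proof -
  obtain C where C: "\<And>p. potf N \<gamma> m (r(i := p)) =
      C + (\<Sum>j\<in>{..<N} - {i}. \<gamma> * m i * m j / norm (r j - p))"
    using potf_fun_upd[OF i] by blast
  have "r j \<noteq> r i" if "j \<in> {..<N} - {i}" for j
    using r i that unfolding config_space_def by auto
  then have "((\<lambda>p. C + (\<Sum>j\<in>{..<N} - {i}. \<gamma> * m i * m j * (1 / norm (r j - p)))) has_derivative
      (\<lambda>v. 0 + (\<Sum>j\<in>{..<N} - {i}. \<gamma> * m i * m j * ((r j - r i) \<bullet> v / norm (r j - r i) ^ 3)))) (at (r i))"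
    by (intro has_derivative_add has_derivative_const has_derivative_sum has_derivative_mult_right
        has_derivative_inverse_norm_diff)
  then show ?thesis
    unfolding C force_def inner_sum_left inner_scaleR_left by (simp add: mult_ac)
qed

lemma has_derivative_momg_fun_upd:
  assumes "i < N"
  shows "((\<lambda>p. momg N m (r(i := p))) has_derivative (\<lambda>v. 2 * m i * (p \<bullet> v))) (at p)"
  unfolding momg_fun_upd[OF assms] power2_norm_eq_inner
  by (auto intro!: derivative_eq_intros simp: inner_commute)

lemma force_at_energy_minimiser:
  assumes i: "i < N" and rl: "rl \<in> config_space N"
    and rl_min: "\<forall>s\<in>config_space N.
        potf N \<gamma> m rl + lam * momg N m rl \<le> potf N \<gamma> m s + lam * momg N m s"
  shows "force N \<gamma> m rl i = (- 2 * lam * m i) *\<^sub>R rl i"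
proof -
  define E where "E p = potf N \<gamma> m (rl(i := p)) + lam * momg N m (rl(i := p))" for p
  define S where "S = - rl ` ({..<N} - {i})"
  define w where "w = force N \<gamma> m rl i + (2 * lam * m i) *\<^sub>R rl i"
  have "(E has_derivative (\<lambda>v. force N \<gamma> m rl i \<bullet> v + lam * (2 * m i * (rl i \<bullet> v)))) (at (rl i))"
    unfolding E_def
    by (intro has_derivative_add has_derivative_mult_right has_derivative_potf_fun_upd
        has_derivative_momg_fun_upd rl i)
  moreover have "rl i \<in> S" "open S"
    using rl i unfolding S_def config_space_def by (auto intro: finite_imp_closed)
  moreover have "\<forall>p\<in>S. E (rl i) \<le> E p"
    using rl_min fun_upd_in_config_space_iff[OF rl i] unfolding E_def S_def by simp
  ultimately have "(\<lambda>v. force N \<gamma> m rl i \<bullet> v + lam * (2 * m i * (rl i \<bullet> v))) = (\<lambda>v. 0)"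
    using differential_zero_maxmin by blast
  from fun_cong[OF this, of w] have "w \<bullet> w = 0"
    unfolding w_def by (simp add: inner_add_left mult_ac)
  then have "w = 0" by simp
  moreover have "force N \<gamma> m rl i = w - (2 * lam * m i) *\<^sub>R rl i"
    unfolding w_def by simp
  ultimately show ?thesis by simp
qed

definition rot :: "real \<Rightarrow> real \<times> real \<Rightarrow> real \<times> real" where
  "rot \<theta> v = (cos \<theta> * fst v - sin \<theta> * snd v, sin \<theta> * fst v + cos \<theta> * snd v)"

lemma linear_rot: "linear (rot \<theta>)"
  by (rule linearI) (auto simp: rot_def algebra_simps)

lemma norm_rot: "norm (rot \<theta> v) = norm v"
proof -
  obtain x y where v: "v = (x, y)" by (cases v)
  have "(cos \<theta> * x - sin \<theta> * y)\<^sup>2 + (sin \<theta> * x + cos \<theta> * y)\<^sup>2 =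
      ((sin \<theta>)\<^sup>2 + (cos \<theta>)\<^sup>2) * (x\<^sup>2 + y\<^sup>2)"
    unfolding power2_eq_square by algebra
  then show ?thesis by (simp add: v rot_def norm_Pair)
qed

lemma rot_polar: "rot \<theta> (\<rho> * cos \<phi>, \<rho> * sin \<phi>) = (\<rho> * cos (\<phi> + \<theta>), \<rho> * sin (\<phi> + \<theta>))"
  by (simp add: rot_def cos_add sin_add algebra_simps)

lemma rot_add_pi: "rot (\<theta> + pi) v = - rot \<theta> v"
  by (simp add: rot_def)

lemma has_vector_derivative_rot:
  "((\<lambda>s. rot (\<omega> * s + \<theta>) v) has_vector_derivative \<omega> *\<^sub>R rot (\<omega> * t + \<theta> + pi / 2) v)
    (at t within S)"
  unfolding rot_def scaleR_Pair
  by (rule has_vector_derivative_Pair;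
      rule has_real_derivative_iff_has_vector_derivative[THEN iffD1];
      auto intro!: derivative_eq_intros simp: cos_add sin_add algebra_simps)

lemma config_space_linear_isometry:
  assumes "linear L" and "\<And>v. norm (L v) = norm v"
    and "\<forall>j<N. r' j = L (r j)" and "r \<in> config_space N"
  shows "r' \<in> config_space N"
proof -
  have "r' j \<noteq> r' k" if "j < N" "k < N" "j \<noteq> k" for j k
  proof -
    have "norm (r' j - r' k) = norm (r j - r k)"
      using assms that by (simp add: linear_diff[symmetric])
    then show ?thesis using assms(4) that unfolding config_space_def by auto
  qed
  then show ?thesis unfolding config_space_def by blast
qed

lemma force_linear_isometry:
  assumes "linear L" and "\<And>v. norm (L v) = norm v"
    and "\<forall>j<N. r' j = L (r j)" and "i < N"
  shows "force N \<gamma> m r' i = L (force N \<gamma> m r i)"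
  unfolding force_def linear_sum[OF assms(1)] linear_scale[OF assms(1)]
  using assms by (intro sum.cong) (simp_all add: linear_diff[symmetric])

theorem theorem3p1:
  fixes N :: nat and m :: "nat \<Rightarrow> real" and \<gamma> lam :: real
    and rl :: "nat \<Rightarrow> real \<times> real" and \<phi> :: "nat \<Rightarrow> real"
  assumes N: "N \<ge> 2"
    and m_pos: "\<forall>i<N. m i > 0"
    and gamma_pos: "\<gamma> > 0"
    and lam_pos: "lam > 0"
    and rl_in: "rl \<in> config_space N"
    and rl_min: "\<forall>s\<in>config_space N.
        potf N \<gamma> m rl + lam * momg N m rl \<le> potf N \<gamma> m s + lam * momg N m s"
    and polar: "\<forall>i<N. rl i = (norm (rl i) * cos (\<phi> i), norm (rl i) * sin (\<phi> i))"
  defines "\<omega> \<equiv> sqrt (2 * lam)"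
  defines "R \<equiv> (\<lambda>t i. (norm (rl i) * cos (\<phi> i + \<omega> * t), norm (rl i) * sin (\<phi> i + \<omega> * t)))"
  shows "(\<forall>t\<ge>0. R t \<in> config_space N) \<and>
         (\<exists>V A :: real \<Rightarrow> nat \<Rightarrow> real \<times> real.
            (\<forall>i<N. \<forall>t\<ge>0.
               ((\<lambda>s. R s i) has_vector_derivative V t i) (at t within {0..}) \<and>
               ((\<lambda>s. V s i) has_vector_derivative A t i) (at t within {0..}) \<and>
               m i *\<^sub>R A t i = force N \<gamma> m (R t) i) \<and>
            (\<forall>i<N. R 0 i = rl i \<and> V 0 i = (- \<omega> * snd (rl i), \<omega> * fst (rl i))))"
proof -
  have \<omega>_sq: "\<omega> * \<omega> = 2 * lam"
    unfolding \<omega>_def using lam_pos by simp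
  have R_rot: "\<forall>j<N. R t j = rot (\<omega> * t) (rl j)" for t
    using polar unfolding R_def by (metis rot_polar)
  define V where "V t i = \<omega> *\<^sub>R rot (\<omega> * t + pi / 2) (rl i)" for t i
  define A where "A t i = \<omega> *\<^sub>R \<omega> *\<^sub>R rot (\<omega> * t + pi) (rl i)" for t i
  have "R t \<in> config_space N" for t
    using config_space_linear_isometry[OF linear_rot norm_rot R_rot rl_in] .
  moreover have "((\<lambda>s. R s i) has_vector_derivative V t i) (at t within {0..})" if "i < N" for i t
  proof -
    have "(\<lambda>s. R s i) = (\<lambda>s. rot (\<omega> * s + 0) (rl i))"
      using R_rot that by simp
    then show ?thesis
      unfolding V_def using has_vector_derivative_rot[of \<omega> 0 "rl i"] by simp
  qed
  moreover have "((\<lambda>s. V s i) has_vector_derivative A t i) (at t within {0..})" for i t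
    unfolding V_def A_def
    using bounded_linear.has_vector_derivative[OF bounded_linear_scaleR_right
        has_vector_derivative_rot[of \<omega> "pi / 2" "rl i" t]]
    by (simp add: add.assoc)
  moreover have "m i *\<^sub>R A t i = force N \<gamma> m (R t) i" if "i < N" for i t
  proof -
    have "force N \<gamma> m (R t) i = rot (\<omega> * t) ((- 2 * lam * m i) *\<^sub>R rl i)"
      using force_linear_isometry[OF linear_rot norm_rot R_rot that]
        force_at_energy_minimiser[OF that rl_in rl_min] by simp
    then show ?thesis
      unfolding A_def rot_add_pi linear_scale[OF linear_rot] using \<omega>_sq by simp
  qed
  moreover have "R 0 i = rl i \<and> V 0 i = (- \<omega> * snd (rl i), \<omega> * fst (rl i))" if "i < N" for i
    using R_rot that by (simp add: V_def rot_def)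
  ultimately show ?thesis by blast
qed

end
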